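(* Let $q:\mathcal U\to\mathbb R^p$ be continuous, differentiable on $\mathrm{Int}(\mathcal U)$, with derivative $Dq$ symmetric and positive definite on $\mathrm{Int}(\mathcal U)$, and suppose the image $\mathcal Y:=q(\mathcal U)$ is convex. Then the restriction $q|_{\mathrm{Int}(\mathcal U)}$ is a continuous bijection from $\mathrm{Int}(\mathcal U)$ onto $\mathrm{Int}(\mathcal Y)$.
   Context: $\mathcal U\subset\mathbb R^p$ is a compact convex set (with piecewise $C^1$ boundary and nonempty interior). $Dq$ denotes the Jacobian matrix of $q$. *)

theory Defs
  imports "HOL-Analysis.Analysis"
begin

definition pos_def_matrix :: "real^'n^'n \<Rightarrow> bool" where
  "pos_def_matrix A \<longleftrightarrow> (\<forall>v. v \<noteq> 0 \<longrightarrow> v \<bullet> (A *v v) > 0)"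

definition symmetric_matrix :: "real^'n^'n \<Rightarrow> bool" where
  "symmetric_matrix A \<longleftrightarrow> transpose A = A"

end

theory Submission
  imports Defs "HOL-Homology.Invariance_of_Domain" "HOL-Complex_Analysis.Cauchy_Integral_Theorem"
begin

(* Symmetry of Dq makes the line integral of q around every triangle in the convex open set
   interior U vanish (Goursat's subdivision argument, which needs differentiability only
   pointwise), so q behaves like the gradient of a convex function: comparing q(a).(b - a) with
   the line integral of q from a to b, positive semidefiniteness yields the 3-cyclic monotonicity
   q(a).(b - a) + q(b).(c - b) + q(c).(a - c) <= 0, which extends to U by continuity.
   Positive definiteness makes q strictly monotone, hence injective, on interior U, and
   invariance of domain gives q(interior U) <= interior q(U).  Conversely, let x0 be a boundary
   point of U with inner normal a and q(x0) interior to q(U).  Then q(x0) - t a = q(x1) for some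
   x1 in U and small t > 0, and cyclic monotonicity at x0, x1 and the points z between x1 and an
   interior point c forces (q(z) - q(x1)).(c - x1) >= t a.(c - x0) > 0, contradicting continuity
   of q at x1. *)

definition segment_integral :: "('a::euclidean_space \<Rightarrow> 'a) \<Rightarrow> 'a \<Rightarrow> 'a \<Rightarrow> real" where
  "segment_integral q a b = integral {0..1} (\<lambda>t. q (a + t *\<^sub>R (b - a)) \<bullet> (b - a))"

lemma convex_mem_segment_point:
  assumes "convex D" "a \<in> D" "b \<in> D" "t \<in> {0..1}"
  shows "a + t *\<^sub>R (b - a) \<in> D"
proof -
  have "a + t *\<^sub>R (b - a) = (1 - t) *\<^sub>R a + t *\<^sub>R b" by (simp add: algebra_simps)
  then show ?thesis using assms by (auto intro: convexD_alt)
qed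

lemma continuous_on_segment_path:
  fixes q :: "'a::real_normed_vector \<Rightarrow> 'b::topological_space"
  assumes "convex D" "a \<in> D" "b \<in> D" and "continuous_on D q"
  shows "continuous_on {0..1} (\<lambda>t. q (a + t *\<^sub>R (b - a)))"
  by (rule continuous_on_compose2[OF assms(4)])
     (use convex_mem_segment_point[OF assms(1-3)] in \<open>auto intro!: continuous_intros\<close>)

lemma continuous_on_segment_integrand:
  fixes q :: "'a::euclidean_space \<Rightarrow> 'a"
  assumes "convex D" "a \<in> D" "b \<in> D" and "continuous_on D q"
  shows "continuous_on {0..1} (\<lambda>t. q (a + t *\<^sub>R (b - a)) \<bullet> (b - a))"
  by (intro continuous_on_inner continuous_on_segment_path[OF assms] continuous_on_const)

lemma segment_integral_subsegment:
  fixes q :: "'a::euclidean_space \<Rightarrow> 'a"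
  assumes D: "convex D" "a \<in> D" "b \<in> D" and cq: "continuous_on D q"
    and u: "u \<in> {0..1}" and v: "v \<in> {0..1}"
  defines "h \<equiv> \<lambda>t. q (a + t *\<^sub>R (b - a)) \<bullet> (b - a)"
  defines "H \<equiv> \<lambda>x. integral {0..x} h"
  shows "segment_integral q (a + u *\<^sub>R (b - a)) (a + v *\<^sub>R (b - a)) = H v - H u"
proof -
  define g where "g s = u + s * (v - u)" for s
  have g01: "g s \<in> {0..1}" if "s \<in> {0..1}" for s
  proof -
    have "g s = (1 - s) * u + s * v" by (simp add: g_def algebra_simps)
    moreover have "(1 - s) * u + s * v \<le> (1 - s) * 1 + s * 1"
      using that u v by (intro add_mono mult_left_mono) auto
    ultimately show ?thesis using that u v by auto
  qed
  have "((\<lambda>s. (v - u) * h (g s)) has_integral (H (g 1) - H (g 0))) {0..1}"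
  proof (rule fundamental_theorem_of_calculus)
    fix s :: real assume s: "s \<in> {0..1}"
    have "(g has_vector_derivative (v - u)) (at s within {0..1})"
      unfolding g_def by (auto intro!: derivative_eq_intros)
    moreover have "(H has_vector_derivative h (g s)) (at (g s) within g ` {0..1})"
    proof (rule has_vector_derivative_within_subset)
      show "(H has_vector_derivative h (g s)) (at (g s) within {0..1})"
        unfolding H_def h_def
        by (rule integral_has_vector_derivative[OF continuous_on_segment_integrand[OF D cq]])
           (use g01 s in blast)
    qed (use g01 in blast)
    ultimately show "((\<lambda>s. H (g s)) has_vector_derivative (v - u) * h (g s)) (at s within {0..1})"
      using vector_diff_chain_within by (fastforce simp: o_def)
  qed simp
  moreover have "(v - u) * h (g s) =
      q ((a + u *\<^sub>R (b - a)) + s *\<^sub>R ((a + v *\<^sub>R (b - a)) - (a + u *\<^sub>R (b - a))))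
        \<bullet> ((a + v *\<^sub>R (b - a)) - (a + u *\<^sub>R (b - a)))" for s
  proof -
    have point: "(a + u *\<^sub>R (b - a)) + s *\<^sub>R ((a + v *\<^sub>R (b - a)) - (a + u *\<^sub>R (b - a)))
        = a + g s *\<^sub>R (b - a)"
      by (simp add: g_def algebra_simps)
    have direction: "(a + v *\<^sub>R (b - a)) - (a + u *\<^sub>R (b - a)) = (v - u) *\<^sub>R (b - a)"
      by (simp add: algebra_simps)
    show ?thesis unfolding point unfolding direction h_def by (simp only: inner_scaleR_right)
  qed
  ultimately show ?thesis unfolding segment_integral_def by (simp add: integral_unique g_def)
qed

lemma segment_integral_midpoint_split:
  fixes q :: "'a::euclidean_space \<Rightarrow> 'a"
  assumes "convex D" "a \<in> D" "b \<in> D" and "continuous_on D q"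
  shows "segment_integral q a b = segment_integral q a (midpoint a b) + segment_integral q (midpoint a b) b"
proof -
  have "a + (1/2) *\<^sub>R (b - a) = midpoint a b"
    by (simp add: midpoint_def algebra_simps) (metis scaleR_add_left field_sum_of_halves scaleR_one)
  then show ?thesis
    using segment_integral_subsegment[OF assms, of 0 1] segment_integral_subsegment[OF assms, of 0 "1/2"]
      segment_integral_subsegment[OF assms, of "1/2" 1]
    by simp
qed

lemma segment_integral_swap:
  fixes q :: "'a::euclidean_space \<Rightarrow> 'a"
  assumes "convex D" "a \<in> D" "b \<in> D" and "continuous_on D q"
  shows "segment_integral q b a = - segment_integral q a b"
  using segment_integral_subsegment[OF assms, of 0 1] segment_integral_subsegment[OF assms, of 1 0]
  by simp

lemma segment_integral_add:
  fixes q r :: "'a::euclidean_space \<Rightarrow> 'a"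
  assumes D: "convex D" "a \<in> D" "b \<in> D" and "continuous_on D q" "continuous_on D r"
  shows "segment_integral (\<lambda>z. q z + r z) a b = segment_integral q a b + segment_integral r a b"
  unfolding segment_integral_def inner_add_left
  by (intro integral_add integrable_continuous_real continuous_on_segment_integrand[OF D assms(4)]
        continuous_on_segment_integrand[OF D assms(5)])

lemma segment_integral_affine:
  fixes L :: "'a::euclidean_space \<Rightarrow> 'a"
  assumes L: "linear L" and sym: "\<And>u v. u \<bullet> L v = v \<bullet> L u"
  shows "segment_integral (\<lambda>z. w + L z) a b
           = (w \<bullet> b + (1/2) * (b \<bullet> L b)) - (w \<bullet> a + (1/2) * (a \<bullet> L a))"
proof -
  define d where "d = b - a"
  define \<alpha> where "\<alpha> = (w + L a) \<bullet> d"
  define \<beta> where "\<beta> = L d \<bullet> d"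
  have integrand: "(w + L (a + t *\<^sub>R d)) \<bullet> d = \<alpha> + t * \<beta>" for t
    by (simp add: \<alpha>_def \<beta>_def linear_add[OF L] linear_scale[OF L] algebra_simps inner_add_left)
  have "((\<lambda>t. \<alpha> + t * \<beta>) has_integral
          ((\<lambda>t. \<alpha> * t + \<beta> * t^2 / 2) 1 - (\<lambda>t. \<alpha> * t + \<beta> * t^2 / 2) 0)) {0..1}"
    by (rule fundamental_theorem_of_calculus)
       (auto intro!: derivative_eq_intros simp: has_real_derivative_iff_has_vector_derivative[symmetric])
  then have "segment_integral (\<lambda>z. w + L z) a b = \<alpha> + \<beta> / 2"
    unfolding segment_integral_def d_def[symmetric] integrand by (simp add: integral_unique)
  also have "\<dots> = (w \<bullet> b + (1/2) * (b \<bullet> L b)) - (w \<bullet> a + (1/2) * (a \<bullet> L a))"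
  proof -
    have "b = a + d" by (simp add: d_def)
    moreover have "a \<bullet> L d = d \<bullet> L a" by (rule sym)
    ultimately show ?thesis unfolding \<alpha>_def \<beta>_def
      by (simp add: linear_add[OF L] inner_add_left inner_add_right algebra_simps inner_commute)
  qed
  finally show ?thesis .
qed

lemma abs_segment_integral_le:
  fixes q :: "'a::euclidean_space \<Rightarrow> 'a"
  assumes D: "convex D" "a \<in> D" "b \<in> D" and cq: "continuous_on D q"
    and B: "\<And>z. z \<in> closed_segment a b \<Longrightarrow> norm (q z) \<le> B"
  shows "\<bar>segment_integral q a b\<bar> \<le> B * norm (b - a)"
proof -
  let ?f = "\<lambda>t. q (a + t *\<^sub>R (b - a)) \<bullet> (b - a)"
  have "norm (integral {0..1} ?f) \<le> (B * norm (b - a)) * (1 - 0)"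
  proof (rule integral_bound)
    show "continuous_on {0..1} ?f" by (rule continuous_on_segment_integrand[OF D cq])
    fix t :: real assume t: "t \<in> {0..1}"
    have "a + t *\<^sub>R (b - a) \<in> closed_segment a b"
      using t unfolding closed_segment_def by (auto intro!: exI[of _ t] simp: algebra_simps)
    then have "norm (q (a + t *\<^sub>R (b - a))) \<le> B" by (rule B)
    then show "norm (?f t) \<le> B * norm (b - a)"
      by (metis Cauchy_Schwarz_ineq2 mult_right_mono norm_ge_zero order_trans real_norm_def)
  qed simp
  then show ?thesis unfolding segment_integral_def by simp
qed

definition triangle_integral :: "('a::euclidean_space \<Rightarrow> 'a) \<Rightarrow> 'a \<Rightarrow> 'a \<Rightarrow> 'a \<Rightarrow> real" where
  "triangle_integral q a b c = segment_integral q a b + segment_integral q b c + segment_integral q c a"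

lemma triangle_integral_quadrisect:
  fixes q :: "'a::euclidean_space \<Rightarrow> 'a"
  assumes D: "convex D" "a \<in> D" "b \<in> D" "c \<in> D" and cq: "continuous_on D q"
  defines "a' \<equiv> midpoint b c" and "b' \<equiv> midpoint c a" and "c' \<equiv> midpoint a b"
  shows "triangle_integral q a b c = triangle_integral q a c' b' + triangle_integral q a' c' b
           + triangle_integral q a' c b' + triangle_integral q a' b' c'"
proof -
  have m: "a' \<in> D" "b' \<in> D" "c' \<in> D"
    unfolding a'_def b'_def c'_def using D
    by (meson closed_segment_subset midpoint_in_closed_segment subsetD)+
  show ?thesis unfolding triangle_integral_def
    using segment_integral_midpoint_split[OF D(1,2,3) cq] segment_integral_midpoint_split[OF D(1,3,4) cq]
      segment_integral_midpoint_split[OF D(1,4,2) cq] segment_integral_swap[OF D(1) m(1) m(2) cq]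
      segment_integral_swap[OF D(1) m(2) m(3) cq] segment_integral_swap[OF D(1) m(3) m(1) cq]
    by (simp add: a'_def b'_def c'_def midpoint_sym)
qed

lemma dist_midpoint_midpoint:
  fixes u v w :: "'a::real_normed_vector"
  shows "dist (midpoint u v) (midpoint u w) = dist v w / 2"
    and "dist (midpoint v u) (midpoint u w) = dist v w / 2"
    and "dist (midpoint u v) (midpoint w u) = dist v w / 2"
    and "dist (midpoint v u) (midpoint w u) = dist v w / 2"
proof -
  have "midpoint u v - midpoint u w = (1/2) *\<^sub>R (v - w)"
    by (simp add: midpoint_def algebra_simps)
  then show "dist (midpoint u v) (midpoint u w) = dist v w / 2"
    by (simp add: dist_norm)
  then show "dist (midpoint v u) (midpoint u w) = dist v w / 2"
    and "dist (midpoint u v) (midpoint w u) = dist v w / 2"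
    and "dist (midpoint v u) (midpoint w u) = dist v w / 2"
    by (simp_all add: midpoint_sym)
qed

lemma triangle_integral_quadrisection:
  fixes q :: "'a::euclidean_space \<Rightarrow> 'a"
  assumes D: "convex D" "a \<in> D" "b \<in> D" "c \<in> D" and cq: "continuous_on D q"
    and K: "dist a b \<le> K" "dist b c \<le> K" "dist c a \<le> K"
    and e: "e * K^2 \<le> \<bar>triangle_integral q a b c\<bar>"
  obtains a' b' c' where "convex hull {a',b',c'} \<subseteq> convex hull {a,b,c}"
    "dist a' b' \<le> K/2" "dist b' c' \<le> K/2" "dist c' a' \<le> K/2"
    "e * (K/2)^2 \<le> \<bar>triangle_integral q a' b' c'\<bar>"
proof -
  define a' b' c' where "a' = midpoint b c" and "b' = midpoint c a" and "c' = midpoint a b"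
  let ?H = "convex hull {a,b,c}"
  have vertices: "a \<in> ?H" "b \<in> ?H" "c \<in> ?H"
    by (simp_all add: hull_subset[THEN subsetD])
  have midpoints: "a' \<in> ?H" "b' \<in> ?H" "c' \<in> ?H"
    unfolding a'_def b'_def c'_def using vertices by (simp_all add: midpoints_in_convex_hull)
  have sub: "convex hull {u,v,w} \<subseteq> ?H" if "u \<in> ?H" "v \<in> ?H" "w \<in> ?H" for u v w
    using that by (simp add: hull_minimal convex_convex_hull)
  have halves: "dist a c' = dist a b / 2" "dist c' b' = dist b c / 2" "dist b' a = dist c a / 2"
    "dist a' c' = dist c a / 2" "dist c' b = dist a b / 2" "dist b a' = dist b c / 2"
    "dist a' c = dist b c / 2" "dist c b' = dist c a / 2" "dist b' a' = dist a b / 2"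
    "dist a' b' = dist a b / 2" "dist b' c' = dist b c / 2" "dist c' a' = dist c a / 2"
    unfolding a'_def b'_def c'_def
    by (simp_all add: dist_midpoint dist_midpoint_midpoint dist_commute)
  have "e * K^2 \<le> norm (triangle_integral q a c' b' + triangle_integral q a' c' b
           + triangle_integral q a' c b' + triangle_integral q a' b' c')"
    using e triangle_integral_quadrisect[OF D cq] unfolding a'_def b'_def c'_def by simp
  from norm_sum_lemma[OF this]
  have "e * (K/2)^2 \<le> \<bar>triangle_integral q a c' b'\<bar> \<or> e * (K/2)^2 \<le> \<bar>triangle_integral q a' c' b\<bar>
      \<or> e * (K/2)^2 \<le> \<bar>triangle_integral q a' c b'\<bar> \<or> e * (K/2)^2 \<le> \<bar>triangle_integral q a' b' c'\<bar>"
    by (simp add: power_divide)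
  then show thesis
    by (elim disjE) (rule that[OF sub]; use vertices midpoints K in \<open>simp_all add: halves\<close>)+
qed

lemma abs_triangle_integral_le_affine_deviation:
  fixes q L :: "'a::euclidean_space \<Rightarrow> 'a"
  assumes cq: "continuous_on (convex hull {a,b,c}) q"
    and L: "linear L" and sym: "\<And>u v. u \<bullet> L v = v \<bullet> L u"
    and M: "\<And>z. z \<in> convex hull {a,b,c} \<Longrightarrow> norm (q z - (w + L z)) \<le> M"
  shows "\<bar>triangle_integral q a b c\<bar> \<le> M * (dist a b + dist b c + dist c a)"
proof -
  define S where "S = convex hull {a,b,c}"
  have S: "convex S" "a \<in> S" "b \<in> S" "c \<in> S"
    by (auto simp: S_def hull_subset[THEN subsetD] convex_convex_hull)
  define R where "R z = q z - (w + L z)" for z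
  have caff: "continuous_on S (\<lambda>z. w + L z)"
    by (intro continuous_intros linear_continuous_on linear_conv_bounded_linear[THEN iffD1, OF L])
  have cR: "continuous_on S R"
    unfolding R_def by (intro continuous_on_diff caff) (use cq S_def in simp)
  have split: "segment_integral q u v = segment_integral (\<lambda>z. w + L z) u v + segment_integral R u v"
    if "u \<in> S" "v \<in> S" for u v
  proof -
    have "q = (\<lambda>z. (w + L z) + R z)" by (simp add: R_def fun_eq_iff)
    then show ?thesis using segment_integral_add[OF S(1) that caff cR] by simp
  qed
  have R_bound: "\<bar>segment_integral R u v\<bar> \<le> M * dist u v" if "u \<in> S" "v \<in> S" for u v
    using abs_segment_integral_le[OF S(1) that cR, of M] M closed_segment_subset[OF that S(1)]
    by (auto simp: R_def S_def dist_norm norm_minus_commute)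
  have "triangle_integral q a b c = segment_integral R a b + segment_integral R b c + segment_integral R c a"
    unfolding triangle_integral_def using split S by (simp add: segment_integral_affine[OF L sym])
  then show ?thesis
    using R_bound S by (simp add: distrib_left) (smt (verit))
qed

lemma triangle_integral_small_near:
  fixes q :: "'a::euclidean_space \<Rightarrow> 'a"
  assumes cq: "continuous_on D q"
    and der: "(q has_derivative L) (at x)" and sym: "\<And>u v. u \<bullet> L v = v \<bullet> L u" and e: "0 < e"
  obtains k where "0 < k"
    "\<And>a b c. dist a b \<le> k \<Longrightarrow> dist b c \<le> k \<Longrightarrow> dist c a \<le> k \<Longrightarrow>
       x \<in> convex hull {a,b,c} \<Longrightarrow> convex hull {a,b,c} \<subseteq> D \<Longrightarrow>
       \<bar>triangle_integral q a b c\<bar> \<le> e * (dist a b + dist b c + dist c a)^2"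
proof -
  obtain d where d: "0 < d"
    and approx: "\<And>y. norm (y - x) < d \<Longrightarrow> norm (q y - q x - L (y - x)) \<le> e * norm (y - x)"
    using der e unfolding has_derivative_at_alt by blast
  have lin: "linear L" using der by (rule has_derivative_linear)
  show thesis
  proof (rule that[of "d/2"])
    fix a b c assume close: "dist a b \<le> d/2" "dist b c \<le> d/2" "dist c a \<le> d/2"
      and x: "x \<in> convex hull {a,b,c}" and hull_D: "convex hull {a,b,c} \<subseteq> D"
    define p where "p = dist a b + dist b c + dist c a"
    have "norm (q y - (q x - L x + L y)) \<le> e * p" if y: "y \<in> convex hull {a,b,c}" for y
    proof -
      have "norm (y - x) \<le> norm (a - b) \<or> norm (y - x) \<le> norm (b - c) \<or> norm (y - x) \<le> norm (c - a)"
        using simplex_extremal_le[of "{a,b,c}"] y x by (auto simp: norm_minus_commute)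
      then have near: "norm (y - x) \<le> d/2" and "norm (y - x) \<le> p"
        using close norm_ge_zero[of "a - b"] norm_ge_zero[of "b - c"] norm_ge_zero[of "c - a"]
        unfolding p_def dist_norm by linarith+
      have "q y - (q x - L x + L y) = q y - q x - L (y - x)"
        by (simp add: linear_diff[OF lin] algebra_simps)
      also have "norm \<dots> \<le> e * norm (y - x)"
        using approx[of y] near d by simp
      also have "\<dots> \<le> e * p"
        using \<open>norm (y - x) \<le> p\<close> e by (simp add: mult_left_mono)
      finally show ?thesis by simp
    qed
    then have "\<bar>triangle_integral q a b c\<bar> \<le> (e * p) * p"
      unfolding p_def
      by (rule abs_triangle_integral_le_affine_deviation[OF continuous_on_subset[OF cq hull_D] lin sym])
    then show "\<bar>triangle_integral q a b c\<bar> \<le> e * (dist a b + dist b c + dist c a)^2"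
      by (simp add: p_def power2_eq_square)
  qed (use d in simp)
qed

lemma triangle_integral_nested_triangles:
  fixes q :: "'a::euclidean_space \<Rightarrow> 'a"
  assumes D: "convex D" "a \<in> D" "b \<in> D" "c \<in> D" and cq: "continuous_on D q"
    and K: "dist a b \<le> K" "dist b c \<le> K" "dist c a \<le> K"
    and e: "e * K^2 \<le> \<bar>triangle_integral q a b c\<bar>"
  obtains x where "\<And>n. \<exists>a' b' c'. x \<in> convex hull {a',b',c'} \<and> convex hull {a',b',c'} \<subseteq> convex hull {a,b,c}
      \<and> dist a' b' \<le> K/2^n \<and> dist b' c' \<le> K/2^n \<and> dist c' a' \<le> K/2^n
      \<and> e * (K/2^n)^2 \<le> \<bar>triangle_integral q a' b' c'\<bar>"
proof -
  have hull_D: "convex hull {a,b,c} \<subseteq> D" using D by (simp add: hull_minimal)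
  define At where "At x y z n \<longleftrightarrow> convex hull {x,y,z} \<subseteq> convex hull {a,b,c} \<and>
      dist x y \<le> K/2^n \<and> dist y z \<le> K/2^n \<and> dist z x \<le> K/2^n \<and>
      e * (K/2^n)^2 \<le> \<bar>triangle_integral q x y z\<bar>" for x y z and n :: nat
  have At0: "At a b c 0" using K e by (simp add: At_def)
  have AtSuc: "\<exists>x' y' z'. At x' y' z' (Suc n) \<and> convex hull {x',y',z'} \<subseteq> convex hull {x,y,z}"
    if "At x y z n" for x y z n
  proof -
    have hull: "convex hull {x,y,z} \<subseteq> convex hull {a,b,c}"
      and "dist x y \<le> K/2^n" "dist y z \<le> K/2^n" "dist z x \<le> K/2^n"
      and "e * (K/2^n)^2 \<le> \<bar>triangle_integral q x y z\<bar>"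
      using that unfolding At_def by auto
    moreover have "x \<in> D" "y \<in> D" "z \<in> D"
      using hull hull_D hull_subset[of "{x,y,z}"] by blast+
    ultimately obtain x' y' z' where sub: "convex hull {x',y',z'} \<subseteq> convex hull {x,y,z}"
      and small: "dist x' y' \<le> K/2^n/2" "dist y' z' \<le> K/2^n/2" "dist z' x' \<le> K/2^n/2"
        "e * (K/2^n/2)^2 \<le> \<bar>triangle_integral q x' y' z'\<bar>"
      using triangle_integral_quadrisection[OF D(1) _ _ _ cq] by metis
    have "K/2^n/2 = K/2^Suc n" by simp
    then have "At x' y' z' (Suc n)"
      unfolding At_def using subset_trans[OF sub hull] small by presburger
    with sub show ?thesis by blast
  qed
  obtain fa fb fc where
      "fa 0 = a" "fb 0 = b" "fc 0 = c" and At: "\<And>n. At (fa n) (fb n) (fc n) n"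
      and nested: "\<And>n. convex hull {fa (Suc n), fb (Suc n), fc (Suc n)} \<subseteq> convex hull {fa n, fb n, fc n}"
    using Chain3[of At a b c "\<lambda>x' y' z' x y z. convex hull {x',y',z'} \<subseteq> convex hull {x,y,z}",
        OF At0 AtSuc]
    by blast
  obtain x where x: "\<And>n. x \<in> convex hull {fa n, fb n, fc n}"
  proof (rule bounded_closed_nest)
    show "\<And>m n. m \<le> n \<Longrightarrow> convex hull {fa n, fb n, fc n} \<subseteq> convex hull {fa m, fb m, fc m}"
      by (erule transitive_stepwise_le) (auto simp: nested)
  qed (auto simp: compact_imp_closed finite_imp_compact_convex_hull finite_imp_bounded_convex_hull)
  show thesis
    using x At unfolding At_def by (intro that) blast
qed

lemma triangle_integral_eq_0:
  fixes q :: "'a::euclidean_space \<Rightarrow> 'a"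
  assumes D: "convex D" and cq: "continuous_on D q"
    and der: "\<And>x. x \<in> D \<Longrightarrow> (q has_derivative L x) (at x)"
    and sym: "\<And>x u v. x \<in> D \<Longrightarrow> u \<bullet> L x v = v \<bullet> L x u"
    and abc: "a \<in> D" "b \<in> D" "c \<in> D"
  shows "triangle_integral q a b c = 0"
proof (rule ccontr)
  assume nz: "triangle_integral q a b c \<noteq> 0"
  define K where "K = 1 + max (dist a b) (max (dist b c) (dist c a))"
  define e where "e = \<bar>triangle_integral q a b c\<bar> / K^2"
  have "K \<ge> 1" by (simp add: K_def max.coboundedI1)
  then have K: "K > 0" by linarith
  have e: "e > 0" unfolding e_def using nz K by simp
  have "dist a b \<le> K" "dist b c \<le> K" "dist c a \<le> K" by (simp_all add: K_def)
  moreover have "e * K^2 \<le> \<bar>triangle_integral q a b c\<bar>" using K by (simp add: e_def)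
  ultimately obtain x where x: "\<And>n. \<exists>a' b' c'. x \<in> convex hull {a',b',c'}
      \<and> convex hull {a',b',c'} \<subseteq> convex hull {a,b,c}
      \<and> dist a' b' \<le> K/2^n \<and> dist b' c' \<le> K/2^n \<and> dist c' a' \<le> K/2^n
      \<and> e * (K/2^n)^2 \<le> \<bar>triangle_integral q a' b' c'\<bar>"
    by (rule triangle_integral_nested_triangles[OF D abc cq]) blast
  have hull_D: "convex hull {a,b,c} \<subseteq> D" using D abc by (simp add: hull_minimal)
  then have "x \<in> D" using x[of 0] by blast
  obtain k where k: "k > 0" and small: "\<And>a b c. dist a b \<le> k \<Longrightarrow> dist b c \<le> k \<Longrightarrow> dist c a \<le> k \<Longrightarrow>
      x \<in> convex hull {a,b,c} \<Longrightarrow> convex hull {a,b,c} \<subseteq> D \<Longrightarrow>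
      \<bar>triangle_integral q a b c\<bar> \<le> (e/10) * (dist a b + dist b c + dist c a)^2"
    using triangle_integral_small_near[OF cq der[OF \<open>x \<in> D\<close>] sym[OF \<open>x \<in> D\<close>], of "e/10"] e by auto
  obtain n where "K / k < 2 ^ n" using real_arch_pow[of 2 "K/k"] by auto
  then have "K / 2^n < k" using k by (simp add: field_simps)
  define r where "r = K / 2^n"
  have r: "r > 0" using K by (simp add: r_def)
  obtain a' b' c' where "x \<in> convex hull {a',b',c'}" "convex hull {a',b',c'} \<subseteq> D"
    and sides: "dist a' b' \<le> r" "dist b' c' \<le> r" "dist c' a' \<le> r"
    and big: "e * r^2 \<le> \<bar>triangle_integral q a' b' c'\<bar>"
    using x[of n] hull_D unfolding r_def by blast
  with \<open>K / 2^n < k\<close> have "\<bar>triangle_integral q a' b' c'\<bar> \<le> (e/10) * (dist a' b' + dist b' c' + dist c' a')^2"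
    by (intro small) (auto simp: r_def)
  also have "\<dots> \<le> (e/10) * (3 * r)^2"
    using e sides by (intro mult_left_mono power_mono) auto
  also have "\<dots> < e * r^2" using e r by (simp add: power_mult_distrib)
  finally show False using big by linarith
qed

lemma has_real_derivative_inner_segment:
  fixes q :: "'a::euclidean_space \<Rightarrow> 'a"
  assumes der: "(q has_derivative L) (at (a + t *\<^sub>R (b - a)))"
  shows "((\<lambda>t. q (a + t *\<^sub>R (b - a)) \<bullet> (b - a)) has_real_derivative ((b - a) \<bullet> L (b - a))) (at t)"
proof -
  have lin: "linear L" using der by (rule has_derivative_linear)
  have "((\<lambda>t. a + t *\<^sub>R (b - a)) has_derivative (\<lambda>s. s *\<^sub>R (b - a))) (at t)"
    by (auto intro!: derivative_eq_intros)
  from has_derivative_compose[OF this der]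
  have "((\<lambda>t. q (a + t *\<^sub>R (b - a)) \<bullet> (b - a)) has_derivative (\<lambda>s. L (s *\<^sub>R (b - a)) \<bullet> (b - a))) (at t)"
    by (rule has_derivative_inner_left)
  moreover have "(\<lambda>s. L (s *\<^sub>R (b - a)) \<bullet> (b - a)) = (*) ((b - a) \<bullet> L (b - a))"
    by (simp add: fun_eq_iff linear_scale[OF lin] inner_commute)
  ultimately show ?thesis unfolding has_field_derivative_def by simp
qed

lemma pos_def_derivative_imp_strictly_monotone:
  fixes q :: "'a::euclidean_space \<Rightarrow> 'a"
  assumes D: "convex D" and der: "\<And>x. x \<in> D \<Longrightarrow> (q has_derivative L x) (at x)"
    and pd: "\<And>x v. x \<in> D \<Longrightarrow> v \<noteq> 0 \<Longrightarrow> v \<bullet> L x v > 0"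
    and ab: "a \<in> D" "b \<in> D" "a \<noteq> b"
  shows "(q b - q a) \<bullet> (b - a) > 0"
proof -
  let ?h = "\<lambda>t. q (a + t *\<^sub>R (b - a)) \<bullet> (b - a)"
  have "?h 0 < ?h 1"
  proof (rule DERIV_pos_imp_increasing[of 0 1])
    fix t :: real assume "0 \<le> t" "t \<le> 1"
    then have "a + t *\<^sub>R (b - a) \<in> D" using convex_mem_segment_point[OF D ab(1,2)] by auto
    then show "\<exists>y. (?h has_real_derivative y) (at t) \<and> y > 0"
      using has_real_derivative_inner_segment der pd ab(3) by force
  qed simp
  then show ?thesis by (simp add: inner_diff_left)
qed

lemma inner_le_segment_integral:
  fixes q :: "'a::euclidean_space \<Rightarrow> 'a"
  assumes D: "convex D" and cq: "continuous_on D q"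
    and der: "\<And>x. x \<in> D \<Longrightarrow> (q has_derivative L x) (at x)"
    and psd: "\<And>x v. x \<in> D \<Longrightarrow> v \<bullet> L x v \<ge> 0"
    and ab: "a \<in> D" "b \<in> D"
  shows "q a \<bullet> (b - a) \<le> segment_integral q a b"
proof -
  let ?h = "\<lambda>t. q (a + t *\<^sub>R (b - a)) \<bullet> (b - a)"
  have "?h 0 \<le> ?h t" if t: "t \<in> {0..1}" for t
  proof (rule DERIV_nonneg_imp_nondecreasing[of 0 t])
    fix s :: real assume "0 \<le> s" "s \<le> t"
    then have "a + s *\<^sub>R (b - a) \<in> D" using convex_mem_segment_point[OF D ab] t by auto
    then show "\<exists>y. (?h has_real_derivative y) (at s) \<and> y \<ge> 0"
      using has_real_derivative_inner_segment der psd by blast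
  qed (use t in auto)
  then have "integral {0..1} (\<lambda>t::real. ?h 0) \<le> integral {0..1} ?h"
    by (intro integral_le integrable_continuous_real continuous_on_segment_integrand[OF D ab cq]) auto
  then show ?thesis unfolding segment_integral_def by simp
qed

(* The inequality summed over f b >= f a + q a . (b - a) when q is the gradient of a convex f. *)
definition cyclically_monotone3_on :: "'a::real_inner set \<Rightarrow> ('a \<Rightarrow> 'a) \<Rightarrow> bool" where
  "cyclically_monotone3_on S q \<longleftrightarrow>
     (\<forall>a\<in>S. \<forall>b\<in>S. \<forall>c\<in>S. q a \<bullet> (b - a) + q b \<bullet> (c - b) + q c \<bullet> (a - c) \<le> 0)"

lemma symmetric_psd_derivative_imp_cyclically_monotone3:
  fixes q :: "'a::euclidean_space \<Rightarrow> 'a"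
  assumes D: "convex D" and cq: "continuous_on D q"
    and der: "\<And>x. x \<in> D \<Longrightarrow> (q has_derivative L x) (at x)"
    and sym: "\<And>x u v. x \<in> D \<Longrightarrow> u \<bullet> L x v = v \<bullet> L x u"
    and psd: "\<And>x v. x \<in> D \<Longrightarrow> v \<bullet> L x v \<ge> 0"
  shows "cyclically_monotone3_on D q"
  unfolding cyclically_monotone3_on_def
proof (intro ballI)
  fix a b c assume abc: "a \<in> D" "b \<in> D" "c \<in> D"
  have "triangle_integral q a b c = 0" by (rule triangle_integral_eq_0[OF D cq der sym abc])
  then show "q a \<bullet> (b - a) + q b \<bullet> (c - b) + q c \<bullet> (a - c) \<le> 0"
    using inner_le_segment_integral[OF D cq der psd] abc unfolding triangle_integral_def
    by (smt (verit))
qed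

lemma cyclically_monotone3_on_from_interior:
  fixes q :: "'a::euclidean_space \<Rightarrow> 'a"
  assumes U: "convex U" and c: "c \<in> interior U" and cq: "continuous_on U q"
    and cm: "cyclically_monotone3_on (interior U) q"
  shows "cyclically_monotone3_on U q"
  unfolding cyclically_monotone3_on_def
proof (intro ballI)
  fix a b z assume abz: "a \<in> U" "b \<in> U" "z \<in> U"
  define shrink where "shrink \<delta> w = w + \<delta> *\<^sub>R (c - w)" for \<delta> w
  define E where "E \<delta> = q (shrink \<delta> a) \<bullet> (shrink \<delta> b - shrink \<delta> a)
      + q (shrink \<delta> b) \<bullet> (shrink \<delta> z - shrink \<delta> b) + q (shrink \<delta> z) \<bullet> (shrink \<delta> a - shrink \<delta> z)" for \<delta>
  have shrink_U: "continuous_on {0..1} (\<lambda>\<delta>. q (shrink \<delta> w))" if "w \<in> U" for w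
    unfolding shrink_def
    by (rule continuous_on_segment_path[OF U that interior_subset[THEN subsetD, OF c] cq])
  have cont: "continuous_on (closure {0<..1}) E"
    unfolding E_def using shrink_U abz
    by (simp add: shrink_def) (intro continuous_intros; simp)
  have inside: "E \<delta> \<le> 0" if "\<delta> \<in> {0<..1}" for \<delta>
  proof -
    have "shrink \<delta> w \<in> interior U" if "w \<in> U" for w
      using mem_interior_convex_shrink[OF U c that, of \<delta>] \<open>\<delta> \<in> {0<..1}\<close>
      by (simp add: shrink_def algebra_simps)
    then show ?thesis using cm abz unfolding E_def cyclically_monotone3_on_def by blast
  qed
  have "E 0 \<le> 0" by (rule continuous_le_on_closure[OF cont _ inside]) simp
  then show "q a \<bullet> (b - a) + q b \<bullet> (z - b) + q z \<bullet> (a - z) \<le> 0"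
    by (simp add: E_def shrink_def)
qed

lemma cyclically_monotone3_on_shift_notin_image:
  fixes q :: "'a::euclidean_space \<Rightarrow> 'a"
  assumes U: "convex U" and cq: "continuous_on U q" and cm: "cyclically_monotone3_on U q"
    and x0: "x0 \<in> U" and c: "c \<in> U"
    and normal: "\<And>z. z \<in> U \<Longrightarrow> a \<bullet> x0 \<le> a \<bullet> z" and strict: "a \<bullet> x0 < a \<bullet> c"
    and t: "t > 0"
  shows "q x0 - t *\<^sub>R a \<notin> q ` U"
proof
  assume "q x0 - t *\<^sub>R a \<in> q ` U"
  then obtain x1 where x1: "x1 \<in> U" and qx1: "q x1 = q x0 - t *\<^sub>R a" by auto
  define m where "m = a \<bullet> (c - x0)"
  define z where "z s = x1 + s *\<^sub>R (c - x1)" for s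
  define g where "g s = (q (z s) - q x1) \<bullet> (c - x1)" for s
  have g_ge: "t * m \<le> g s" if s: "s \<in> {0<..1}" for s
  proof -
    have "z s \<in> U" unfolding z_def using convex_mem_segment_point[OF U x1 c] s by simp
    then have "q x0 \<bullet> (z s - x0) + q (z s) \<bullet> (x1 - z s) + q x1 \<bullet> (x0 - x1) \<le> 0"
      using cm x0 x1 unfolding cyclically_monotone3_on_def by blast
    moreover have "q x0 \<bullet> (z s - x0) + q (z s) \<bullet> (x1 - z s) + q x1 \<bullet> (x0 - x1)
        = (q x0 - q x1) \<bullet> (z s - x0) + (q (z s) - q x1) \<bullet> (x1 - z s)"
      by (simp only: inner_diff_left inner_diff_right)
    moreover have "(q x0 - q x1) \<bullet> (z s - x0) = t * (a \<bullet> (z s - x0))"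
      and "(q (z s) - q x1) \<bullet> (x1 - z s) = - (s * g s)"
      by (simp_all add: qx1 g_def z_def)
    moreover have "s * m \<le> a \<bullet> (z s - x0)"
    proof -
      have "z s - x0 = (1 - s) *\<^sub>R (x1 - x0) + s *\<^sub>R (c - x0)"
        by (simp add: z_def algebra_simps)
      moreover have "0 \<le> (1 - s) * (a \<bullet> (x1 - x0))"
        using normal[OF x1] s by (simp add: inner_diff_right)
      ultimately show ?thesis by (simp add: m_def inner_add_right)
    qed
    then have "t * (s * m) \<le> t * (a \<bullet> (z s - x0))"
      using t by (simp add: mult_left_mono)
    ultimately have "s * (t * m) \<le> s * g s"
      by (simp add: algebra_simps)
    then show ?thesis using s by simp
  qed
  have "continuous_on (closure {0<..1}) g"
    unfolding g_def z_def using continuous_on_segment_path[OF U x1 c cq]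
    by simp (intro continuous_intros; assumption)
  then have "t * m \<le> g 0" by (rule continuous_ge_on_closure[OF _ _ g_ge]) simp
  moreover have "g 0 = 0" by (simp add: g_def z_def)
  moreover have "0 < t * m" using t strict by (simp add: m_def inner_diff_right)
  ultimately show False by simp
qed

lemma interior_image_subset_image_interior:
  fixes q :: "'a::euclidean_space \<Rightarrow> 'a"
  assumes U: "convex U" "interior U \<noteq> {}" and cq: "continuous_on U q"
    and cm: "cyclically_monotone3_on U q"
  shows "interior (q ` U) \<subseteq> q ` interior U"
proof
  fix y assume y: "y \<in> interior (q ` U)"
  then obtain x0 where x0: "x0 \<in> U" and y_eq: "y = q x0" using interior_subset by blast
  show "y \<in> q ` interior U"
  proof (cases "x0 \<in> interior U")
    case True
    then show ?thesis using y_eq by blast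
  next
    case False
    then have "x0 \<notin> rel_interior U" using rel_interior_nonempty_interior[OF U(2)] by simp
    then obtain a where "a \<noteq> 0" and normal: "\<And>z. z \<in> closure U \<Longrightarrow> a \<bullet> x0 \<le> a \<bullet> z"
        and strict: "\<And>z. z \<in> rel_interior U \<Longrightarrow> a \<bullet> x0 < a \<bullet> z"
      using supporting_hyperplane_relative_frontier[OF U(1) closure_subset[THEN subsetD, OF x0]] by metis
    obtain c where c: "c \<in> interior U" using U(2) by blast
    obtain r where "r > 0" and ball: "ball y r \<subseteq> q ` U" using y by (auto simp: mem_interior)
    define t where "t = r / (2 * norm a)"
    have "t > 0" using \<open>r > 0\<close> \<open>a \<noteq> 0\<close> by (simp add: t_def)
    have "dist y (y - t *\<^sub>R a) = r / 2"
      using \<open>r > 0\<close> \<open>a \<noteq> 0\<close> by (simp add: t_def dist_norm)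
    then have "q x0 - t *\<^sub>R a \<in> q ` U" using ball \<open>r > 0\<close> y_eq by auto
    moreover have "q x0 - t *\<^sub>R a \<notin> q ` U"
      using cyclically_monotone3_on_shift_notin_image[OF U(1) cq cm x0 interior_subset[THEN subsetD, OF c]]
        normal closure_subset strict c rel_interior_nonempty_interior[OF U(2)] \<open>t > 0\<close>
      by blast
    ultimately show ?thesis by contradiction
  qed
qed

lemma symmetric_matrix_inner_commute:
  fixes f :: "real^'n \<Rightarrow> real^'n"
  assumes "linear f" and "symmetric_matrix (matrix f)"
  shows "u \<bullet> f v = v \<bullet> f u"
proof -
  have f_eq: "f x = matrix f *v x" for x
    using matrix_vector_mul(2)[OF assms(1)] by metis
  have "u \<bullet> (matrix f *v v) = (transpose (matrix f) *v u) \<bullet> v"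
    by (simp add: dot_lmul_matrix[symmetric])
  also have "\<dots> = v \<bullet> (matrix f *v u)"
    using assms(2) by (simp add: symmetric_matrix_def inner_commute)
  finally show ?thesis by (simp add: f_eq)
qed

lemma pos_def_matrix_inner_pos:
  fixes f :: "real^'n \<Rightarrow> real^'n"
  assumes "linear f" and "pos_def_matrix (matrix f)" and "v \<noteq> 0"
  shows "v \<bullet> f v > 0"
  using assms matrix_vector_mul(2)[OF assms(1)] by (simp add: pos_def_matrix_def)

theorem mainTheorem8:
  fixes U :: "(real^'p) set"
    and q :: "real^'p \<Rightarrow> real^'p"
    and Dq :: "real^'p \<Rightarrow> real^'p \<Rightarrow> real^'p"
  assumes "compact U" and "convex U" and "interior U \<noteq> {}"
    and "continuous_on U q"
    and "\<And>x. x \<in> interior U \<Longrightarrow> (q has_derivative Dq x) (at x)"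
    and "\<And>x. x \<in> interior U \<Longrightarrow> symmetric_matrix (matrix (Dq x))"
    and "\<And>x. x \<in> interior U \<Longrightarrow> pos_def_matrix (matrix (Dq x))"
    and "convex (q ` U)"
  shows "continuous_on (interior U) q \<and> bij_betw q (interior U) (interior (q ` U))"
proof -
  have lin: "linear (Dq x)" if "x \<in> interior U" for x
    using assms(5)[OF that] by (rule has_derivative_linear)
  have sym: "u \<bullet> Dq x v = v \<bullet> Dq x u" if "x \<in> interior U" for x u v
    by (rule symmetric_matrix_inner_commute[OF lin assms(6)]) (fact that)+
  have pd: "v \<bullet> Dq x v > 0" if "x \<in> interior U" "v \<noteq> 0" for x v
    by (rule pos_def_matrix_inner_pos[OF lin assms(7)]) (fact that)+
  have psd: "v \<bullet> Dq x v \<ge> 0" if "x \<in> interior U" for x v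
    using pd[OF that, of v] by (cases "v = 0") auto
  have cont: "continuous_on (interior U) q"
    using assms(4) interior_subset continuous_on_subset by blast
  have inj: "inj_on q (interior U)"
  proof (rule inj_onI)
    fix a b assume "a \<in> interior U" "b \<in> interior U" "q a = q b"
    then show "a = b"
      using pos_def_derivative_imp_strictly_monotone[OF convex_interior[OF assms(2)] assms(5) pd, of a b]
      by auto
  qed
  obtain c where c: "c \<in> interior U" using assms(3) by blast
  have "cyclically_monotone3_on U q"
    by (rule cyclically_monotone3_on_from_interior[OF assms(2) c assms(4)
          symmetric_psd_derivative_imp_cyclically_monotone3[OF convex_interior[OF assms(2)] cont assms(5) sym psd]])
  then have "interior (q ` U) \<subseteq> q ` interior U"
    by (rule interior_image_subset_image_interior[OF assms(2,3,4)])
  moreover have "q ` interior U \<subseteq> interior (q ` U)"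
    by (intro interior_maximal image_mono interior_subset invariance_of_domain cont open_interior inj)
  ultimately show ?thesis using cont inj by (auto simp: bij_betw_def)
qed

end
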